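(* Suppose a unitary $C$ is written in the form $$C=H_{\mathbf a}P_{\mathbf d}Z_{\mathbf D}\,\mathbf H\,e^{\mathrm{i}\phi}X_{\mathbf u}Z_{\mathbf v}P_{\mathbf b}Z_{\mathbf B}X_{\mathbf A}$$ with $\mathbf a,\mathbf d,\mathbf u,\mathbf v,\mathbf b\in\mathbb F_2^n$, $\mathbf D,\mathbf B\in\mathcal B_n$, $\mathbf A\in GL_n(\mathbb F_2)$ and $\phi\in\{k\pi/4:k\in\mathbb Z\}$. Then for every $i\in\{0,\dots,n-1\}$, the product $H_iC$ can also be written in this form (with possibly different data $\mathbf a,\mathbf d,\mathbf D,\phi,\mathbf u,\mathbf v,\mathbf b,\mathbf B,\mathbf A$ of the same types).
   Context: Qubits are labelled $0,\dots,n-1$; computational basis $\{|x\rangle:x\in\mathbb F_2^n\}$; $\mathrm{i}=\sqrt{-1}$. One-qubit gates $\mathtt H=\frac1{\sqrt2}\begin{pmatrix}1&1\\1&-1\end{pmatrix}$, $\mathtt P=\mathrm{diag}(1,\mathrm{i})$, $\mathtt Z=\mathrm{diag}(1,-1)$, $\mathtt X=\begin{pmatrix}0&1\\1&0\end{pmatrix}$; $U_i$ denotes the gate $\mathtt U$ acting on qubit $i$, and $U_{\mathbf a}=\prod_iU_i^{a_i}$ for $\mathbf a\in\mathbb F_2^n$. $\mathbf H=\prod_{i=0}^{n-1}H_i$. For $\mathbf A\in GL_n(\mathbb F_2)$, $X_{\mathbf A}|x\rangle=|\mathbf Ax\rangle$. $\mathcal B_n$ is the set of symmetric $n\times n$ matrices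 over $\mathbb F_2$ with zero diagonal, and for $\mathbf B\in\mathcal B_n$, $Z_{\mathbf B}|x\rangle=(-1)^{\sum_{i<j}b_{ij}x_ix_j}|x\rangle$. *)

theory Defs
  imports Complex_Main "HOL-Library.Z2"
begin

text \<open>A computational basis state / a vector in F_2^n is a function x :: nat => bit
  with x i = 0 for all i >= n (coordinates 0..n-1).
  An operator on the n-qubit space is given by its matrix elements
  M x y = <x|M|y>, and is required (by construction) to vanish outside the
  basis states.\<close>

definition states :: "nat \<Rightarrow> (nat \<Rightarrow> bit) set" where
  "states n = {x. \<forall>i\<ge>n. x i = 0}"

type_synonym op = "(nat \<Rightarrow> bit) \<Rightarrow> (nat \<Rightarrow> bit) \<Rightarrow> complex"

definition f2mat :: "nat \<Rightarrow> (nat \<Rightarrow> nat \<Rightarrow> bit) \<Rightarrow> bool" where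
  "f2mat n A \<longleftrightarrow> (\<forall>i j. (n \<le> i \<or> n \<le> j) \<longrightarrow> A i j = 0)"

definition f2matmul :: "nat \<Rightarrow> (nat \<Rightarrow> nat \<Rightarrow> bit) \<Rightarrow> (nat \<Rightarrow> nat \<Rightarrow> bit) \<Rightarrow> (nat \<Rightarrow> nat \<Rightarrow> bit)" where
  "f2matmul n A B = (\<lambda>i j. \<Sum>k<n. A i k * B k j)"

definition f2id :: "nat \<Rightarrow> (nat \<Rightarrow> nat \<Rightarrow> bit)" where
  "f2id n = (\<lambda>i j. if i = j \<and> i < n then 1 else 0)"

definition GLn :: "nat \<Rightarrow> (nat \<Rightarrow> nat \<Rightarrow> bit) \<Rightarrow> bool" where
  "GLn n A \<longleftrightarrow> f2mat n A \<and>
     (\<exists>A'. f2mat n A' \<and> f2matmul n A A' = f2id n \<and> f2matmul n A' A = f2id n)"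

definition Bn :: "nat \<Rightarrow> (nat \<Rightarrow> nat \<Rightarrow> bit) \<Rightarrow> bool" where
  "Bn n B \<longleftrightarrow> f2mat n B \<and> (\<forall>i j. B i j = B j i) \<and> (\<forall>i. B i i = 0)"

definition matvec :: "nat \<Rightarrow> (nat \<Rightarrow> nat \<Rightarrow> bit) \<Rightarrow> (nat \<Rightarrow> bit) \<Rightarrow> (nat \<Rightarrow> bit)" where
  "matvec n A x = (\<lambda>i. \<Sum>j<n. A i j * x j)"

definition omul :: "nat \<Rightarrow> op \<Rightarrow> op \<Rightarrow> op" where
  "omul n M N = (\<lambda>x y. \<Sum>z\<in>states n. M x z * N z y)"

definition oid :: "nat \<Rightarrow> op" where
  "oid n = (\<lambda>x y. if x \<in> states n \<and> x = y then 1 else 0)"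

definition oscal :: "nat \<Rightarrow> complex \<Rightarrow> op" where
  "oscal n c = (\<lambda>x y. if x \<in> states n \<and> x = y then c else 0)"

definition gate1 :: "nat \<Rightarrow> nat \<Rightarrow> (bit \<Rightarrow> bit \<Rightarrow> complex) \<Rightarrow> op" where
  "gate1 n i U = (\<lambda>x y. if x \<in> states n \<and> y \<in> states n \<and> (\<forall>j. j \<noteq> i \<longrightarrow> x j = y j)
                        then U (x i) (y i) else 0)"

definition Hm :: "bit \<Rightarrow> bit \<Rightarrow> complex" where
  "Hm b c = (if b = 1 \<and> c = 1 then -1 else 1) / complex_of_real (sqrt 2)"

definition Pm :: "bit \<Rightarrow> bit \<Rightarrow> complex" where
  "Pm b c = (if b = c then (if b = 1 then \<i> else 1) else 0)"

definition Zm :: "bit \<Rightarrow> bit \<Rightarrow> complex" where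
  "Zm b c = (if b = c then (if b = 1 then -1 else 1) else 0)"

definition Xm :: "bit \<Rightarrow> bit \<Rightarrow> complex" where
  "Xm b c = (if b = c then 0 else 1)"

definition gatevec :: "nat \<Rightarrow> (bit \<Rightarrow> bit \<Rightarrow> complex) \<Rightarrow> (nat \<Rightarrow> bit) \<Rightarrow> op" where
  "gatevec n U a = foldr (omul n)
      (map (\<lambda>i. if a i = 1 then gate1 n i U else oid n) [0..<n]) (oid n)"

definition Hall :: "nat \<Rightarrow> op" where
  "Hall n = foldr (omul n) (map (\<lambda>i. gate1 n i Hm) [0..<n]) (oid n)"

definition XA :: "nat \<Rightarrow> (nat \<Rightarrow> nat \<Rightarrow> bit) \<Rightarrow> op" where
  "XA n A = (\<lambda>x y. if x \<in> states n \<and> y \<in> states n \<and> x = matvec n A y then 1 else 0)"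

definition ZB :: "nat \<Rightarrow> (nat \<Rightarrow> nat \<Rightarrow> bit) \<Rightarrow> op" where
  "ZB n B = (\<lambda>x y. if x \<in> states n \<and> x = y then
        (if (\<Sum>j<n. \<Sum>i<j. B i j * x i * x j) = 1 then -1 else 1) else 0)"

definition nf :: "nat \<Rightarrow> (nat \<Rightarrow> bit) \<Rightarrow> (nat \<Rightarrow> bit) \<Rightarrow> (nat \<Rightarrow> nat \<Rightarrow> bit) \<Rightarrow> int
     \<Rightarrow> (nat \<Rightarrow> bit) \<Rightarrow> (nat \<Rightarrow> bit) \<Rightarrow> (nat \<Rightarrow> bit) \<Rightarrow> (nat \<Rightarrow> nat \<Rightarrow> bit)
     \<Rightarrow> (nat \<Rightarrow> nat \<Rightarrow> bit) \<Rightarrow> op" where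
  "nf n a d D k u v b B A =
     omul n (gatevec n Hm a) (omul n (gatevec n Pm d) (omul n (ZB n D) (omul n (Hall n)
     (omul n (oscal n (exp (\<i> * complex_of_real (real_of_int k * pi / 4))))
     (omul n (gatevec n Xm u) (omul n (gatevec n Zm v) (omul n (gatevec n Pm b)
     (omul n (ZB n B) (XA n A)))))))))"

definition has_nf :: "nat \<Rightarrow> op \<Rightarrow> bool" where
  "has_nf n C \<longleftrightarrow> (\<exists>a d D k u v b B A.
      a \<in> states n \<and> d \<in> states n \<and> u \<in> states n \<and> v \<in> states n \<and> b \<in> states n \<and>
      Bn n D \<and> Bn n B \<and> GLn n A \<and> C = nf n a d D k u v b B A)"

end

theory Submission
  imports Defs
begin

text \<open>The Hadamard gates in \<open>H\<^sub>a\<close> act on distinct qubits and therefore commute, so \<open>H\<^sub>i\<close>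
  can be moved next to the factor of \<open>H\<^sub>a\<close> on qubit \<open>i\<close>. As \<open>H\<^sub>i\<^sup>2 = 1\<close>, this gives
  \<open>H\<^sub>i H\<^sub>a = H\<^sub>a\<^sub>'\<close>, where \<open>a'\<close> is \<open>a\<close> with the bit \<open>a\<^sub>i\<close> flipped; all other data of
  the normal form are unchanged.\<close>

lemma finite_states: "finite (states n)"
proof -
  have "states n \<subseteq> (\<lambda>S i. if i \<in> S then (1::bit) else 0) ` Pow {..<n}"
  proof
    fix x assume "x \<in> states n"
    then have "x = (\<lambda>i. if i \<in> {j. j < n \<and> x j = 1} then 1 else 0)"
      by (auto simp: states_def fun_eq_iff)
    then show "x \<in> (\<lambda>S i. if i \<in> S then (1::bit) else 0) ` Pow {..<n}" by blast
  qed
  then show ?thesis by (rule finite_subset) auto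
qed

lemma states_upd: "x \<in> states n \<Longrightarrow> i < n \<Longrightarrow> x(i := c) \<in> states n"
  by (auto simp: states_def)

definition supported :: "nat \<Rightarrow> op \<Rightarrow> bool" where
  "supported n M \<longleftrightarrow> (\<forall>x y. M x y \<noteq> 0 \<longrightarrow> x \<in> states n \<and> y \<in> states n)"

lemma supported_oid: "supported n (oid n)"
  by (simp add: supported_def oid_def)

lemma supported_gate1: "supported n (gate1 n i U)"
  by (simp add: supported_def gate1_def)

lemma supported_omul: "supported n M \<Longrightarrow> supported n N \<Longrightarrow> supported n (omul n M N)"
  unfolding supported_def omul_def by (metis (no_types, lifting) mult_eq_0_iff sum.neutral)

lemma omul_assoc: "omul n (omul n A B) C = omul n A (omul n B C)"
proof (intro ext)
  fix x y
  have "omul n (omul n A B) C x y = (\<Sum>z\<in>states n. \<Sum>w\<in>states n. A x w * B w z * C z y)"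
    unfolding omul_def by (simp add: sum_distrib_right)
  also have "\<dots> = (\<Sum>w\<in>states n. \<Sum>z\<in>states n. A x w * B w z * C z y)"
    by (rule sum.swap)
  also have "\<dots> = omul n A (omul n B C) x y"
    unfolding omul_def by (simp add: sum_distrib_left mult.assoc)
  finally show "omul n (omul n A B) C x y = omul n A (omul n B C) x y" .
qed

lemma omul_oid_left:
  assumes "supported n M"
  shows "omul n (oid n) M = M"
proof (intro ext)
  fix x y
  have "omul n (oid n) M x y =
      (\<Sum>z\<in>states n. if z = x then (if x \<in> states n then M x y else 0) else 0)"
    unfolding omul_def oid_def by (rule sum.cong) auto
  also have "\<dots> = M x y"
    using assms by (auto simp: finite_states supported_def)
  finally show "omul n (oid n) M x y = M x y" .
qed

lemma omul_oid_right:
  assumes "supported n M"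
  shows "omul n M (oid n) = M"
proof (intro ext)
  fix x y
  have "omul n M (oid n) x y =
      (\<Sum>z\<in>states n. if z = y then (if y \<in> states n then M x y else 0) else 0)"
    unfolding omul_def oid_def by (rule sum.cong) auto
  also have "\<dots> = M x y"
    using assms by (auto simp: finite_states supported_def)
  finally show "omul n M (oid n) x y = M x y" .
qed

lemma omul_gate1_left:
  assumes "i < n"
  shows "omul n (gate1 n i U) M x y =
    (if x \<in> states n then U (x i) 0 * M (x(i := 0)) y + U (x i) 1 * M (x(i := 1)) y else 0)"
proof (cases "x \<in> states n")
  case False
  then show ?thesis by (simp add: omul_def gate1_def)
next
  case True
  let ?S = "{x(i := 0), x(i := 1)}"
  have S: "?S \<subseteq> states n" using True assms states_upd by auto
  have "omul n (gate1 n i U) M x y = (\<Sum>z\<in>?S. gate1 n i U x z * M z y)"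
    unfolding omul_def
  proof (rule sum.mono_neutral_right[OF finite_states S], rule ballI)
    fix z assume z: "z \<in> states n - ?S"
    have "z = x(i := z i)" if "\<forall>j. j \<noteq> i \<longrightarrow> x j = z j"
      using that by (auto simp: fun_eq_iff)
    then have "\<not> (\<forall>j. j \<noteq> i \<longrightarrow> x j = z j)"
      using z by (cases "z i") auto
    then show "gate1 n i U x z * M z y = 0" by (auto simp: gate1_def)
  qed
  also have "\<dots> = U (x i) 0 * M (x(i := 0)) y + U (x i) 1 * M (x(i := 1)) y"
    using True S by (simp add: gate1_def fun_eq_iff)
  finally show ?thesis using True by simp
qed

lemma gate1_apply:
  "x \<in> states n \<Longrightarrow> gate1 n i U x y =
    (if y \<in> states n \<and> (\<forall>j. j \<noteq> i \<longrightarrow> x j = y j) then U (x i) (y i) else 0)"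
  by (simp add: gate1_def)

lemma omul_gate1_same:
  assumes "i < n"
  shows "omul n (gate1 n i U) (gate1 n i V) = gate1 n i (\<lambda>b c. U b 0 * V 0 c + U b 1 * V 1 c)"
proof (intro ext)
  fix x y :: "nat \<Rightarrow> bit"
  show "omul n (gate1 n i U) (gate1 n i V) x y =
      gate1 n i (\<lambda>b c. U b 0 * V 0 c + U b 1 * V 1 c) x y"
  proof (cases "x \<in> states n")
    case True
    then show ?thesis
      unfolding omul_gate1_left[OF assms] by (auto simp: gate1_apply states_upd assms)
  next
    case False
    then show ?thesis
      unfolding omul_gate1_left[OF assms] by (simp add: gate1_def)
  qed
qed

lemma gate1_id: "gate1 n i (\<lambda>b c. if b = c then 1 else 0) = oid n"
proof (intro ext)
  fix x y :: "nat \<Rightarrow> bit"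
  have "x = y \<longleftrightarrow> x i = y i" if "\<forall>j. j \<noteq> i \<longrightarrow> x j = y j"
    using that by auto
  then show "gate1 n i (\<lambda>b c. if b = c then 1 else 0) x y = oid n x y"
    by (auto simp: gate1_def oid_def)
qed

lemma Hm_mult_Hm: "(\<lambda>b c. Hm b 0 * Hm 0 c + Hm b 1 * Hm 1 c) = (\<lambda>b c. if b = c then 1 else 0)"
proof -
  define r where "r = 1 / complex_of_real (sqrt 2)"
  have "complex_of_real (sqrt 2) * complex_of_real (sqrt 2) = 2"
    by (simp flip: of_real_mult)
  then have r2: "r * r = 1 / 2"
    unfolding r_def by simp
  have Hm_r: "Hm b c = (if b = 1 \<and> c = 1 then - r else r)" for b c
    unfolding Hm_def r_def by simp
  show ?thesis
  proof (intro ext)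
    fix b c :: bit
    show "Hm b 0 * Hm 0 c + Hm b 1 * Hm 1 c = (if b = c then 1 else 0)"
      by (cases b; cases c) (simp_all add: Hm_r r2)
  qed
qed

lemma omul_gate1_Hm_Hm: "i < n \<Longrightarrow> omul n (gate1 n i Hm) (gate1 n i Hm) = oid n"
  by (simp add: omul_gate1_same Hm_mult_Hm gate1_id)

lemma omul_gate1_other:
  assumes "i \<noteq> j" "i < n"
  shows "omul n (gate1 n i U) (gate1 n j V) x y =
    (if x \<in> states n \<and> y \<in> states n \<and> (\<forall>k. k \<noteq> i \<and> k \<noteq> j \<longrightarrow> x k = y k)
     then U (x i) (y i) * V (x j) (y j) else 0)"
proof (cases "x \<in> states n")
  case True
  define agree where "agree \<longleftrightarrow> (\<forall>k. k \<noteq> i \<and> k \<noteq> j \<longrightarrow> x k = y k)"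
  have "(\<forall>k. k \<noteq> j \<longrightarrow> (x(i := c)) k = y k) \<longleftrightarrow> c = y i \<and> agree"
    and "(x(i := c)) j = x j" for c
    using assms(1) by (auto simp: agree_def)
  then have gate1_upd: "gate1 n j V (x(i := c)) y =
      (if y \<in> states n \<and> c = y i \<and> agree then V (x j) (y j) else 0)" for c
    using True assms by (simp add: gate1_apply states_upd del: fun_upd_apply)
  show ?thesis
    unfolding omul_gate1_left[OF assms(2)] gate1_upd agree_def[symmetric]
    using True by (cases "y i") simp_all
qed (simp add: omul_gate1_left[OF assms(2)])

lemma omul_gate1_commute:
  assumes "i \<noteq> j" "i < n" "j < n"
  shows "omul n (gate1 n i U) (gate1 n j V) = omul n (gate1 n j V) (gate1 n i U)"
  using assms by (intro ext) (auto simp: omul_gate1_other mult.commute)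

definition gate_factor :: "nat \<Rightarrow> (bit \<Rightarrow> bit \<Rightarrow> complex) \<Rightarrow> (nat \<Rightarrow> bit) \<Rightarrow> nat \<Rightarrow> op" where
  "gate_factor n U a j = (if a j = 1 then gate1 n j U else oid n)"

definition gate_prod :: "nat \<Rightarrow> (bit \<Rightarrow> bit \<Rightarrow> complex) \<Rightarrow> (nat \<Rightarrow> bit) \<Rightarrow> nat list \<Rightarrow> op" where
  "gate_prod n U a js = foldr (omul n) (map (gate_factor n U a) js) (oid n)"

lemma gate_prod_Nil: "gate_prod n U a [] = oid n"
  by (simp add: gate_prod_def)

lemma gate_prod_Cons:
  "gate_prod n U a (j # js) = omul n (gate_factor n U a j) (gate_prod n U a js)"
  by (simp add: gate_prod_def)

lemma supported_gate_prod: "supported n (gate_prod n U a js)"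
  by (induction js)
    (simp_all add: gate_prod_Nil gate_prod_Cons gate_factor_def
      supported_oid supported_gate1 supported_omul)

lemma gate_prod_cong:
  "(\<And>j. j \<in> set js \<Longrightarrow> a j = b j) \<Longrightarrow> gate_prod n U a js = gate_prod n U b js"
  by (induction js) (simp_all add: gate_prod_Nil gate_prod_Cons gate_factor_def)

lemma gatevec_eq_gate_prod: "gatevec n U a = gate_prod n U a [0..<n]"
  by (simp add: gatevec_def gate_prod_def gate_factor_def[abs_def])

lemma omul_gate1_gate_factor_commute:
  assumes "i \<noteq> j" "i < n" "j < n"
  shows "omul n (gate1 n i V) (gate_factor n U a j) = omul n (gate_factor n U a j) (gate1 n i V)"
  using assms omul_gate1_commute[of i j n V U]
  by (simp add: gate_factor_def omul_oid_left omul_oid_right supported_gate1)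

lemma omul_gate1_gate_prod:
  assumes involutory: "omul n (gate1 n i U) (gate1 n i U) = oid n"
    and "distinct js" "set js \<subseteq> {..<n}" "i \<in> set js"
  shows "omul n (gate1 n i U) (gate_prod n U a js) = gate_prod n U (a(i := a i + 1)) js"
  using assms(2-)
proof (induction js)
  case Nil
  then show ?case by simp
next
  case (Cons j js)
  let ?g = "gate1 n i U" and ?a = "a(i := a i + 1)"
  show ?case
  proof (cases "j = i")
    case True
    then have "i \<notin> set js" using Cons.prems by simp
    then have tail: "gate_prod n U ?a js = gate_prod n U a js"
      by (intro gate_prod_cong) auto
    have "omul n ?g (gate_prod n U a (i # js)) =
        omul n (gate_factor n U ?a i) (gate_prod n U a js)"
      unfolding gate_prod_Cons
      by (cases "a i")
        (simp_all add: gate_factor_def omul_oid_left supported_gate_prod involutory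
          flip: omul_assoc)
    also have "\<dots> = gate_prod n U ?a (i # js)"
      by (simp only: gate_prod_Cons tail)
    finally show ?thesis
      by (simp only: True)
  next
    case False
    then have "i \<noteq> j" "i < n" "j < n" using Cons.prems by auto
    have IH: "omul n ?g (gate_prod n U a js) = gate_prod n U ?a js"
      using Cons.prems False by (intro Cons.IH) auto
    have "omul n ?g (gate_prod n U a (j # js)) =
        omul n (gate_factor n U a j) (omul n ?g (gate_prod n U a js))"
      unfolding gate_prod_Cons omul_assoc[symmetric]
        omul_gate1_gate_factor_commute[OF \<open>i \<noteq> j\<close> \<open>i < n\<close> \<open>j < n\<close>] ..
    also have "\<dots> = gate_prod n U ?a (j # js)"
      using False by (simp add: IH gate_prod_Cons gate_factor_def)
    finally show ?thesis .
  qed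
qed

lemma omul_gate1_gatevec:
  assumes "omul n (gate1 n i U) (gate1 n i U) = oid n" and "i < n"
  shows "omul n (gate1 n i U) (gatevec n U a) = gatevec n U (a(i := a i + 1))"
  unfolding gatevec_eq_gate_prod
  using assms by (intro omul_gate1_gate_prod) auto

theorem lemma4p1:
  fixes n :: nat and C :: op and i :: nat
  assumes "has_nf n C" and "i < n"
  shows "has_nf n (omul n (gate1 n i Hm) C)"
proof -
  obtain a d D k u v b B A where
    data: "a \<in> states n" "d \<in> states n" "u \<in> states n" "v \<in> states n" "b \<in> states n"
      "Bn n D" "Bn n B" "GLn n A" and C: "C = nf n a d D k u v b B A"
    using assms(1) unfolding has_nf_def by blast
  have "omul n (gate1 n i Hm) C = nf n (a(i := a i + 1)) d D k u v b B A"
    unfolding C nf_def omul_assoc[symmetric]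
      omul_gate1_gatevec[OF omul_gate1_Hm_Hm[OF assms(2)] assms(2)] ..
  moreover have "a(i := a i + 1) \<in> states n"
    using data(1) assms(2) by (rule states_upd)
  ultimately show ?thesis
    unfolding has_nf_def using data by blast
qed

end
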